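(* Let $\mathcal{A}$ be a complex Banach algebra with unity and $a,b\in\mathcal{A}$. Then $ab$ is g$\pi$-Hirano invertible if and only if $ba$ is g$\pi$-Hirano invertible.
   Context: $\mathcal{A}^{qnil}$ denotes the set of quasinilpotent elements of $\mathcal{A}$ (spectrum equal to $\{0\}$). An element $a\in\mathcal{A}$ is g$\pi$-Hirano invertible if there exists $x\in\mathcal{A}$ with $xax=x$, $ax=xa$ and $a-a^{n+2}x\in\mathcal{A}^{qnil}$ for some positive integer $n$. *)

theory Defs
  imports "HOL-Analysis.Analysis"
begin

class complex_banach_algebra_1 = real_normed_algebra_1 + banach +
  fixes scaleC :: "complex \<Rightarrow> 'a \<Rightarrow> 'a"
  assumes scaleR_scaleC: "scaleR r x = scaleC (of_real r) x"
    and scaleC_add_right: "scaleC c (x + y) = scaleC c x + scaleC c y"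
    and scaleC_add_left: "scaleC (c + d) x = scaleC c x + scaleC d x"
    and scaleC_scaleC: "scaleC c (scaleC d x) = scaleC (c * d) x"
    and scaleC_one: "scaleC 1 x = x"
    and norm_scaleC: "norm (scaleC c x) = cmod c * norm x"
    and mult_scaleC_left: "scaleC c x * y = scaleC c (x * y)"
    and mult_scaleC_right: "x * scaleC c y = scaleC c (x * y)"

definition invertible_el :: "'a::ring_1 \<Rightarrow> bool" where
  "invertible_el x \<longleftrightarrow> (\<exists>y. x * y = 1 \<and> y * x = 1)"

definition spectrum :: "'a::complex_banach_algebra_1 \<Rightarrow> complex set" where
  "spectrum a = {z. \<not> invertible_el (a - scaleC z 1)}"

definition quasinilpotent :: "'a::complex_banach_algebra_1 \<Rightarrow> bool" where
  "quasinilpotent a \<longleftrightarrow> spectrum a = {0}"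

definition gpi_Hirano_invertible :: "'a::complex_banach_algebra_1 \<Rightarrow> bool" where
  "gpi_Hirano_invertible a \<longleftrightarrow>
     (\<exists>x. x * a * x = x \<and> a * x = x * a \<and>
          (\<exists>n::nat. n > 0 \<and> quasinilpotent (a - a ^ (n + 2) * x)))"

end

theory Submission
  imports Defs
begin

text \<open>
  For \<open>z \<noteq> 0\<close>, \<open>ac - z\<close> is invertible iff \<open>ca - z\<close> is (Jacobson's lemma), so the spectra of
  \<open>ac\<close> and \<open>ca\<close> agree away from \<open>0\<close>; since spectra are nonempty, \<open>ac\<close> is quasinilpotent iff
  \<open>ca\<close> is. If \<open>x\<close> witnesses that \<open>ab\<close> is g\<open>\<pi>\<close>-Hirano invertible, then, as in Cline's formula for
  Drazin inverses, \<open>y = b x\<^sup>2 a\<close> satisfies \<open>y (ba) y = y\<close> and \<open>(ba) y = y (ba)\<close>, and with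
  \<open>c = b (1 - (ab)\<^sup>n\<^sup>+\<^sup>1 x)\<close> the residuals factor as \<open>ab - (ab)\<^sup>n\<^sup>+\<^sup>2 x = a c\<close> and
  \<open>ba - (ba)\<^sup>n\<^sup>+\<^sup>2 y = c a\<close>.

  Nonemptiness of the spectrum is proved without complex analysis. Suppose \<open>t\<close> and all \<open>1 - w t\<close>
  are invertible. Averaging \<open>(1 - w t)\<^sup>-\<^sup>1\<close> over \<open>w = \<omega> z\<close>, \<open>\<omega>\<close> ranging over the \<open>N\<close>-th
  roots of unity, gives \<open>A\<^sub>N(z) = (1 - z\<^sup>N t\<^sup>N)\<^sup>-\<^sup>1\<close>. By uniform continuity, \<open>A\<^sub>2\<^sub>N\<close> is uniformly
  close to \<open>A\<^sub>N\<close> on a large disc once \<open>N\<close> is large. But \<open>A\<^sub>N(0) = 1\<close> and \<open>|A\<^sub>N(R)| \<le> 1/2\<close> for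
  large real \<open>R\<close>, so \<open>|A\<^sub>N(r) - 1| = 1/2\<close> for some \<open>0 \<le> r \<le> R\<close>, and there the identity
  \<open>(h - 1) h = (h - k) (2h - 1)\<close> for \<open>h = (1 - u)\<^sup>-\<^sup>1\<close>, \<open>k = (1 - u\<^sup>2)\<^sup>-\<^sup>1\<close> forces
  \<open>|A\<^sub>N(r) - A\<^sub>2\<^sub>N(r)| \<ge> 1/8\<close>.
\<close>

lemma scaleC_zero_left [simp]: "scaleC 0 (x::'a::complex_banach_algebra_1) = 0"
  using scaleC_add_left[of 0 0 x] by simp

lemma scaleC_minus_left: "scaleC (- c) (x::'a::complex_banach_algebra_1) = - scaleC c x"
  using scaleC_add_left[of "-c" c x] by (simp add: eq_neg_iff_add_eq_0)

lemma scaleC_diff_left: "scaleC (c - d) (x::'a::complex_banach_algebra_1) = scaleC c x - scaleC d x"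
  using scaleC_add_left[of c "-d" x] by (simp add: scaleC_minus_left)

lemma scaleC_sum_left:
  "scaleC (\<Sum>i\<in>A. f i) (x::'a::complex_banach_algebra_1) = (\<Sum>i\<in>A. scaleC (f i) x)"
  by (induction A rule: infinite_finite_induct) (auto simp: scaleC_add_left)

lemma scaleC_of_nat: "scaleC (of_nat n) (x::'a::complex_banach_algebra_1) = of_nat n * x"
  using scaleR_scaleC[of "real n" x] by (simp add: scaleR_conv_of_real)

lemma scaleC_power: "(scaleC c (x::'a::complex_banach_algebra_1)) ^ m = scaleC (c ^ m) (x ^ m)"
  by (induction m) (auto simp: scaleC_one mult_scaleC_left mult_scaleC_right scaleC_scaleC mult.commute)

lemma scaleC_one_commute: "scaleC c 1 * (y::'a::complex_banach_algebra_1) = y * scaleC c 1"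
  by (simp add: mult_scaleC_left mult_scaleC_right)

lemma continuous_on_scaleC_left: "continuous_on S (\<lambda>w. scaleC w (x::'a::complex_banach_algebra_1))"
  unfolding continuous_on_def
proof (intro ballI)
  fix w0 assume "w0 \<in> S"
  have "((\<lambda>w. norm (scaleC w x - scaleC w0 x)) \<longlongrightarrow> 0) (at w0 within S)"
    unfolding norm_scaleC scaleC_diff_left[symmetric]
    by (intro tendsto_mult_left_zero tendsto_norm_zero LIM_zero tendsto_ident_at)
  then have "((\<lambda>w. scaleC w x - scaleC w0 x) \<longlongrightarrow> 0) (at w0 within S)"
    by (rule tendsto_norm_zero_cancel)
  then show "((\<lambda>w. scaleC w x) \<longlongrightarrow> scaleC w0 x) (at w0 within S)"
    by (rule LIM_zero_cancel)
qed

section \<open>Invertible elements\<close>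

definition inverse_el :: "'a::ring_1 \<Rightarrow> 'a" where
  "inverse_el y = (SOME z. y * z = 1 \<and> z * y = 1)"

lemma mult_inverse_el: "invertible_el y \<Longrightarrow> y * inverse_el y = 1 \<and> inverse_el y * y = 1"
  unfolding inverse_el_def invertible_el_def by (rule someI_ex)

lemma invertible_elI:
  fixes x :: "'a::ring_1"
  assumes "x * r = 1" "l * x = 1"
  shows "invertible_el x"
proof -
  have "l = r" by (metis assms mult.assoc mult_1_left mult_1_right)
  then show ?thesis using assms unfolding invertible_el_def by blast
qed

lemma invertible_el_mult:
  fixes p q :: "'a::ring_1"
  assumes "invertible_el p" "invertible_el q"
  shows "invertible_el (p * q)"
proof -
  obtain p' where p: "p * p' = 1" "p' * p = 1" using assms(1) unfolding invertible_el_def by blast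
  obtain q' where q: "q * q' = 1" "q' * q = 1" using assms(2) unfolding invertible_el_def by blast
  have "(p * q) * (q' * p') = 1" "(q' * p') * (p * q) = 1"
    by (metis mult.assoc mult_1_left p q)+
  then show ?thesis by (rule invertible_elI)
qed

lemma jacobson_lemma:
  fixes a c s :: "'a::ring_1"
  assumes central: "\<And>y. s * y = y * s" and "invertible_el s" and "invertible_el (a * c - s)"
  shows "invertible_el (c * a - s)"
proof -
  obtain w where w: "(a * c - s) * w = 1" "w * (a * c - s) = 1"
    using assms(3) unfolding invertible_el_def by blast
  obtain s' where s': "s * s' = 1" "s' * s = 1"
    using assms(2) unfolding invertible_el_def by blast
  have "(c * a - s) * (c * w * a - 1) = c * ((a * c - s) * w) * a - c * a + s"
    by (simp add: ring_distribs central[of c] diff_diff_eq flip: mult.assoc)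
  then have right: "(c * a - s) * (c * w * a - 1) = s" using w(1) by simp
  have "(c * w * a - 1) * (c * a - s) = c * (w * (a * c - s)) * a - c * a + s"
    by (simp add: ring_distribs central[of a, symmetric] mult.assoc)
  then have left: "(c * w * a - 1) * (c * a - s) = s" using w(2) by simp
  show ?thesis
  proof (rule invertible_elI)
    show "(c * a - s) * ((c * w * a - 1) * s') = 1" using right s' by (simp flip: mult.assoc)
    show "(s' * (c * w * a - 1)) * (c * a - s) = 1" using left s' by (simp add: mult.assoc)
  qed
qed

lemma norm_inverse_diff_le:
  fixes w w' v v' :: "'a::real_normed_algebra_1"
  assumes w: "w * w' = 1" "w' * w = 1" and v: "v * v' = 1" "v' * v = 1"
    and small: "norm w' * norm (v - w) \<le> 1/2"
  shows "norm (v' - w') \<le> 2 * norm w' ^ 2 * norm (v - w)"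
proof -
  have "v' - w' = w' * (w - v) * v'"
  proof -
    have "w' * (w - v) * v' = (w' * w) * v' - w' * (v * v')" by (simp add: algebra_simps mult.assoc)
    then show ?thesis using w v by simp
  qed
  then have bound: "norm (v' - w') \<le> norm w' * norm (v - w) * norm v'"
    by (metis norm_minus_commute norm_mult_ineq mult_right_mono norm_ge_zero order_trans)
  have "norm v' \<le> norm w' + norm (v' - w')" by (rule norm_triangle_sub)
  also have "\<dots> \<le> norm w' + norm v' / 2"
    using bound mult_right_mono[OF small norm_ge_zero[of v']] by linarith
  finally have "norm v' \<le> 2 * norm w'" by simp
  then have "norm w' * norm (v - w) * norm v' \<le> norm w' * norm (v - w) * (2 * norm w')"
    by (intro mult_left_mono) simp_all
  with bound show ?thesis by (simp add: power2_eq_square mult_ac)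
qed

lemma continuous_on_inverse_el:
  "continuous_on {x::'a::real_normed_algebra_1. invertible_el x} inverse_el"
  unfolding continuous_on_def
proof (intro ballI)
  let ?S = "{x::'a. invertible_el x}"
  fix w assume "w \<in> ?S"
  then have w: "w * inverse_el w = 1" "inverse_el w * w = 1" by (simp_all add: mult_inverse_el)
  define K where "K = norm (inverse_el w)"
  have "\<forall>\<^sub>F v in at w within ?S. norm (inverse_el v - inverse_el w) \<le> 2 * K ^ 2 * norm (v - w)"
    unfolding eventually_at
  proof (intro exI[of _ "1 / (2 * K + 1)"] conjI ballI impI)
    show "0 < 1 / (2 * K + 1)" by (simp add: K_def add_nonneg_pos)
    fix v assume "v \<in> ?S" and "v \<noteq> w \<and> dist v w < 1 / (2 * K + 1)"
    then have v: "v * inverse_el v = 1" "inverse_el v * v = 1"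
      and "norm (v - w) * (2 * K + 1) < 1"
      by (simp_all add: mult_inverse_el dist_norm pos_less_divide_eq add_nonneg_pos K_def)
    moreover have "norm (v - w) * (2 * K + 1) = 2 * (K * norm (v - w)) + norm (v - w)"
      by (simp add: algebra_simps)
    ultimately have "K * norm (v - w) \<le> 1/2" using norm_ge_zero[of "v - w"] by linarith
    then show "norm (inverse_el v - inverse_el w) \<le> 2 * K ^ 2 * norm (v - w)"
      unfolding K_def by (rule norm_inverse_diff_le[OF w v])
  qed
  moreover have "((\<lambda>v. 2 * K ^ 2 * norm (v - w)) \<longlongrightarrow> 0) (at w within ?S)"
    by (intro tendsto_mult_right_zero tendsto_norm_zero LIM_zero tendsto_ident_at)
  ultimately have "((\<lambda>v. inverse_el v - inverse_el w) \<longlongrightarrow> 0) (at w within ?S)"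
    by (rule Lim_null_comparison)
  then show "(inverse_el \<longlongrightarrow> inverse_el w) (at w within ?S)"
    by (rule LIM_zero_cancel)
qed

section \<open>Averages over roots of unity\<close>

definition root_unity :: "nat \<Rightarrow> complex" where
  "root_unity n = cis (2 * pi / real n)"

lemma root_unity_power: "root_unity n ^ m = cis (2 * pi * real m / real n)"
proof -
  have "root_unity n ^ m = cis (real m * (2 * pi / real n))"
    unfolding root_unity_def by (rule Complex.DeMoivre)
  then show ?thesis by (simp add: mult.commute)
qed

lemma root_unity_power_self: "n > 0 \<Longrightarrow> root_unity n ^ n = 1"
  unfolding root_unity_power by (simp add: complex_eq_iff)

lemma root_unity_power_neq_1:
  assumes "0 < m" "m < n"
  shows "root_unity n ^ m \<noteq> 1"
proof
  assume "root_unity n ^ m = 1"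
  then have eq: "cis (2 * pi * real m / real n) = cis (2 * pi * real 0 / real n)"
    by (simp add: root_unity_power)
  have inj: "inj_on (\<lambda>k. cis (2 * pi * real k / real n)) {..<n}"
    using Complex.bij_betw_roots_unity[of n] assms by (simp add: bij_betw_def)
  have "m = 0" using inj_onD[OF inj eq] assms by simp
  then show False using assms by simp
qed

lemma sum_root_unity_powers:
  assumes "m < n"
  shows "(\<Sum>k<n. (root_unity n ^ m) ^ k) = (if m = 0 then of_nat n else 0)"
proof (cases "m = 0")
  case False
  have "(root_unity n ^ m) ^ n = (root_unity n ^ n) ^ m" by (metis power_mult mult.commute)
  then have "(root_unity n ^ m) ^ n = 1" using root_unity_power_self[of n] assms by simp
  then show ?thesis using False root_unity_power_neq_1[of m n] assms by (simp add: geometric_sum)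
qed simp

lemma root_unity_double_square: "root_unity (2 * n) ^ 2 = root_unity n"
  unfolding root_unity_power by (simp add: root_unity_def)

lemma norm_root_unity [simp]: "norm (root_unity n) = 1"
  unfolding root_unity_def by simp

lemma norm_root_unity_power [simp]: "norm (root_unity n ^ k) = 1"
  unfolding root_unity_def by (simp add: norm_power)

lemma root_unity_double_tendsto: "(\<lambda>n. root_unity (2 * n)) \<longlonglongrightarrow> 1"
proof -
  have "(\<lambda>n. cis (pi / real n)) \<longlonglongrightarrow> cis 0" by (intro tendsto_cis lim_const_over_n)
  then show ?thesis by (simp add: root_unity_def)
qed

definition root_average :: "(complex \<Rightarrow> 'a::real_normed_vector) \<Rightarrow> nat \<Rightarrow> complex \<Rightarrow> 'a" where
  "root_average f n z = scaleR (1 / real n) (\<Sum>k<n. f (root_unity n ^ k * z))"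

lemma sum_lessThan_double:
  "(\<Sum>k<2 * n. f k) = (\<Sum>k<n. f (2 * k) + f (2 * k + 1))" for f :: "nat \<Rightarrow> 'b::comm_monoid_add"
  by (induction n) (auto simp: add_ac)

lemma root_average_double_diff:
  assumes "n > 0"
  shows "root_average f (2 * n) z - root_average f n z =
    scaleR (1/2) (root_average f n (root_unity (2 * n) * z) - root_average f n z)"
proof -
  have even: "root_unity (2 * n) ^ (2 * k) = root_unity n ^ k" for k
    by (simp add: power_mult root_unity_double_square)
  have odd: "root_unity (2 * n) ^ (2 * k + 1) * z = root_unity n ^ k * (root_unity (2 * n) * z)" for k
    by (simp only: power_add even power_one_right mult.assoc)
  have "(\<Sum>k<2 * n. f (root_unity (2 * n) ^ k * z))
      = (\<Sum>k<n. f (root_unity n ^ k * z)) + (\<Sum>k<n. f (root_unity n ^ k * (root_unity (2 * n) * z)))"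
    by (simp only: sum_lessThan_double sum.distrib even odd)
  then have "root_average f (2 * n) z =
      scaleR (1/2) (root_average f n z + root_average f n (root_unity (2 * n) * z))"
    using assms by (simp add: root_average_def scaleR_add_right)
  also have "\<dots> - root_average f n z = scaleR (1/2)
      ((root_average f n z + root_average f n (root_unity (2 * n) * z))
        - (root_average f n z + root_average f n z))"
    by (simp only: scaleR_diff_right scaleR_half_double)
  finally show ?thesis by simp
qed

lemma norm_root_average_diff_le:
  assumes "n > 0"
    and bound: "\<And>k. k < n \<Longrightarrow> norm (f (root_unity n ^ k * w) - f (root_unity n ^ k * z)) \<le> e"
  shows "norm (root_average f n w - root_average f n z) \<le> e"
proof -
  have "norm (\<Sum>k<n. f (root_unity n ^ k * w) - f (root_unity n ^ k * z))
      \<le> (\<Sum>k<n. norm (f (root_unity n ^ k * w) - f (root_unity n ^ k * z)))"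
    by (rule norm_sum)
  also have "\<dots> \<le> (\<Sum>k<n. e)" by (rule sum_mono) (simp add: bound)
  finally have "norm (\<Sum>k<n. f (root_unity n ^ k * w) - f (root_unity n ^ k * z)) \<le> real n * e"
    by simp
  moreover have "root_average f n w - root_average f n z
      = scaleR (1 / real n) (\<Sum>k<n. f (root_unity n ^ k * w) - f (root_unity n ^ k * z))"
    by (simp add: root_average_def sum_subtractf scaleR_diff_right)
  ultimately show ?thesis
    using assms(1) by (simp add: field_simps)
qed

lemma continuous_on_root_average:
  assumes "continuous_on UNIV f"
  shows "continuous_on UNIV (root_average f n)"
  unfolding root_average_def[abs_def]
  by (intro continuous_intros continuous_on_compose2[OF assms]) auto

lemma norm_root_average_rotate_le:
  assumes "n > 0" "cmod w = 1" "cmod z \<le> R" "R * cmod (w - 1) < d"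
    and close: "\<And>z z'. cmod z \<le> R \<Longrightarrow> cmod z' \<le> R \<Longrightarrow> dist z' z < d \<Longrightarrow> dist (f z') (f z) < e"
  shows "norm (root_average f n (w * z) - root_average f n z) \<le> e"
proof (rule norm_root_average_diff_le[OF assms(1)])
  fix k
  have "root_unity n ^ k * (w * z) - root_unity n ^ k * z = root_unity n ^ k * (z * (w - 1))"
    by (simp add: algebra_simps)
  then have "dist (root_unity n ^ k * (w * z)) (root_unity n ^ k * z) = cmod z * cmod (w - 1)"
    by (simp add: dist_norm norm_mult)
  also have "\<dots> \<le> R * cmod (w - 1)" using assms(3) by (intro mult_right_mono) auto
  finally show "norm (f (root_unity n ^ k * (w * z)) - f (root_unity n ^ k * z)) \<le> e"
    using close[of "root_unity n ^ k * z" "root_unity n ^ k * (w * z)"] assms(2-4)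
    by (simp add: dist_norm norm_mult less_imp_le)
qed

lemma root_average_double_close:
  fixes f :: "complex \<Rightarrow> 'a::real_normed_vector"
  assumes "continuous_on UNIV f" "e > 0"
  obtains N where "N > 0" "\<And>z. cmod z \<le> R \<Longrightarrow> norm (root_average f (2 * N) z - root_average f N z) < e"
proof -
  define R' where "R' = \<bar>R\<bar> + 1"
  have R': "R' > 0" "R \<le> R'" by (simp_all add: R'_def)
  have "uniformly_continuous_on (cball 0 R') f"
    by (rule compact_uniformly_continuous[OF continuous_on_subset[OF assms(1)]]) auto
  then obtain d where "d > 0"
    and close: "\<And>z z'. cmod z \<le> R' \<Longrightarrow> cmod z' \<le> R' \<Longrightarrow> dist z' z < d \<Longrightarrow> dist (f z') (f z) < e"
    using assms(2) unfolding uniformly_continuous_on_def by (metis mem_cball_0)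
  obtain N0 where N0: "\<And>N. N \<ge> N0 \<Longrightarrow> norm (root_unity (2 * N) - 1) < d / R'"
    using LIMSEQ_D[OF root_unity_double_tendsto, of "d / R'"] \<open>d > 0\<close> R' by auto
  define N where "N = Suc N0"
  have N: "N > 0" "R' * norm (root_unity (2 * N) - 1) < d"
    using N0[of N] R' by (simp_all add: N_def field_simps)
  show ?thesis
  proof (rule that[OF N(1)])
    fix z assume "cmod z \<le> R"
    then have "norm (root_average f N (root_unity (2 * N) * z) - root_average f N z) \<le> e"
      using R' by (intro norm_root_average_rotate_le[OF N(1) _ _ N(2) close]) auto
    then show "norm (root_average f (2 * N) z - root_average f N z) < e"
      using assms(2) by (simp add: root_average_double_diff[OF N(1)])
  qed
qed

section \<open>Nonemptiness of the spectrum\<close>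

lemma one_minus_mult_sum_powers: "(1 - (y::'a::ring_1)) * (\<Sum>m<n. y ^ m) = 1 - y ^ n"
  by (induction n) (simp_all add: distrib_left left_diff_distrib)

lemma inverse_one_minus_square_identity:
  fixes h k u :: "'a::ring_1"
  assumes h: "h * (1 - u) = 1" "(1 - u) * h = 1"
    and k: "k * (1 - u * u) = 1" and commute: "u * k = k * u"
  shows "(h - 1) * h = (h - k) * (2 * h - 1)"
proof -
  have uh: "u * h = h - 1" and hu: "h * u = h - 1" using h by (simp_all add: algebra_simps)
  have k_plus: "k * (1 + u) = h"
  proof -
    have "k * (1 + u) = k * ((1 + u) * (1 - u)) * h" using h(2) by (simp add: mult.assoc)
    also have "(1 + u) * (1 - u) = 1 - u * u" by (simp add: algebra_simps)
    finally show ?thesis using k by simp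
  qed
  have "h - k = k * u" using k_plus by (simp add: algebra_simps)
  moreover have "2 * h - 1 = (1 + u) * h" using uh by (simp add: algebra_simps mult_2)
  ultimately have "(h - k) * (2 * h - 1) = k * u * ((1 + u) * h)" by simp
  also have "\<dots> = k * (1 + u) * u * h" by (simp add: algebra_simps commute mult.assoc)
  also have "\<dots> = (h - 1) * h" using k_plus hu by simp
  finally show ?thesis by simp
qed

lemma norm_inverse_one_minus_le:
  fixes h u v :: "'a::real_normed_algebra_1"
  assumes "h * (1 - u) = 1" "u * v = 1" "norm v \<le> 1/3"
  shows "norm h \<le> 1/2"
proof -
  have "h * (1 - u) * v = v" using assms(1) by simp
  then have "h = h * v - v" using assms(2) by (simp add: algebra_simps mult.assoc)
  then have "norm h \<le> norm (h * v) + norm v" by (metis norm_triangle_ineq4)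
  also have "\<dots> \<le> norm h * (1/3) + 1/3"
    using assms(3) by (intro add_mono order_trans[OF norm_mult_ineq] mult_left_mono) auto
  finally show ?thesis by simp
qed

lemma norm_diff_inverse_one_minus_square_ge:
  fixes h k u :: "'a::real_normed_algebra_1"
  assumes "h * (1 - u) = 1" "(1 - u) * h = 1" "k * (1 - u * u) = 1" "u * k = k * u"
    and half: "norm (h - 1) = 1/2"
  shows "1/8 \<le> norm (h - k)"
proof -
  define e where "e = h - 1"
  have "norm e - norm (e * e) \<le> norm (e + e * e)" by (metis norm_diff_ineq)
  moreover have "norm (e * e) \<le> 1/4" using norm_mult_ineq[of e e] half by (simp add: e_def)
  moreover have "(h - 1) * h = e + e * e" by (simp add: e_def algebra_simps)
  ultimately have "1/4 \<le> norm ((h - 1) * h)" using half by (simp add: e_def)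
  also have "\<dots> = norm ((h - k) * (2 * h - 1))"
    using inverse_one_minus_square_identity[OF assms(1-4)] by simp
  also have "\<dots> \<le> norm (h - k) * norm (2 * h - 1)" by (rule norm_mult_ineq)
  also have "norm (2 * h - 1) \<le> 2"
  proof -
    have "norm (2 * h - 1) = norm (1 + e + e)" by (simp add: e_def algebra_simps mult_2)
    also have "\<dots> \<le> norm (1::'a) + norm e + norm e" by (metis norm_triangle_ineq order_trans add_right_mono)
    finally show ?thesis using half by (simp add: e_def)
  qed
  then have "norm (h - k) * norm (2 * h - 1) \<le> norm (h - k) * 2" by (intro mult_left_mono) simp_all
  finally show ?thesis by simp
qed

definition inverse_one_minus :: "'a::complex_banach_algebra_1 \<Rightarrow> complex \<Rightarrow> 'a" where
  "inverse_one_minus t w = inverse_el (1 - scaleC w t)"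

context
  fixes t :: "'a::complex_banach_algebra_1"
  assumes invertible: "\<And>w. invertible_el (1 - scaleC w t)"
begin

lemma mult_inverse_one_minus:
  "(1 - scaleC w t) * inverse_one_minus t w = 1" "inverse_one_minus t w * (1 - scaleC w t) = 1"
  using mult_inverse_el[OF invertible[of w]] unfolding inverse_one_minus_def by auto

lemma inverse_one_minus_commute: "inverse_one_minus t w * t = t * inverse_one_minus t w"
proof -
  let ?q = "1 - scaleC w t" and ?g = "inverse_one_minus t w"
  have "?q * t = t * ?q" by (simp add: algebra_simps mult_scaleC_left mult_scaleC_right)
  then have "?g * (?q * t) * ?g = ?g * (t * ?q) * ?g" by simp
  then show ?thesis using mult_inverse_one_minus[of w] by (simp add: mult.assoc flip: mult.assoc[of ?g ?q])
qed

lemma continuous_on_inverse_one_minus: "continuous_on UNIV (inverse_one_minus t)"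
  unfolding inverse_one_minus_def
  using invertible
  by (intro continuous_on_compose2[OF continuous_on_inverse_el] continuous_intros
      continuous_on_scaleC_left) auto

lemma root_average_inverse_one_minus_commute:
  "root_average (inverse_one_minus t) n z * t = t * root_average (inverse_one_minus t) n z"
  by (simp add: root_average_def mult_scaleR_left mult_scaleR_right sum_distrib_left
      sum_distrib_right inverse_one_minus_commute)

lemma inverse_one_minus_mult_geometric:
  "inverse_one_minus t w * (1 - scaleC (w ^ n) (t ^ n)) = (\<Sum>m<n. scaleC (w ^ m) (t ^ m))"
proof -
  have "1 - scaleC (w ^ n) (t ^ n) = (1 - scaleC w t) * (\<Sum>m<n. scaleC w t ^ m)"
    by (simp add: one_minus_mult_sum_powers scaleC_power flip: scaleC_power)
  then show ?thesis
    using mult_inverse_one_minus(2)[of w] by (simp add: scaleC_power flip: mult.assoc)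
qed

lemma root_average_inverse_one_minus:
  assumes "n > 0"
  shows "root_average (inverse_one_minus t) n z * (1 - scaleC (z ^ n) (t ^ n)) = 1"
    and "(1 - scaleC (z ^ n) (t ^ n)) * root_average (inverse_one_minus t) n z = 1"
proof -
  let ?X = "1 - scaleC (z ^ n) (t ^ n)"
  have summand: "inverse_one_minus t (root_unity n ^ k * z) * ?X
      = (\<Sum>m<n. scaleC (z ^ m * (root_unity n ^ m) ^ k) (t ^ m))" for k
  proof -
    have "(root_unity n ^ k) ^ n = 1"
      using root_unity_power_self[OF assms] by (metis power_mult mult.commute power_one)
    then have "(root_unity n ^ k * z) ^ n = z ^ n" by (simp add: power_mult_distrib)
    then have "inverse_one_minus t (root_unity n ^ k * z) * ?X
        = (\<Sum>m<n. scaleC ((root_unity n ^ k * z) ^ m) (t ^ m))"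
      using inverse_one_minus_mult_geometric[of "root_unity n ^ k * z" n] by simp
    then show ?thesis by (simp add: power_mult_distrib mult.commute flip: power_mult)
  qed
  have "(\<Sum>k<n. inverse_one_minus t (root_unity n ^ k * z)) * ?X
      = (\<Sum>k<n. \<Sum>m<n. scaleC (z ^ m * (root_unity n ^ m) ^ k) (t ^ m))"
    by (simp add: sum_distrib_right summand)
  also have "\<dots> = (\<Sum>m<n. \<Sum>k<n. scaleC (z ^ m * (root_unity n ^ m) ^ k) (t ^ m))"
    by (rule sum.swap)
  also have "\<dots> = (\<Sum>m<n. scaleC (z ^ m * (\<Sum>k<n. (root_unity n ^ m) ^ k)) (t ^ m))"
    by (simp add: scaleC_sum_left sum_distrib_left)
  also have "\<dots> = (\<Sum>m<n. if m = 0 then of_nat n else 0)"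
    by (rule sum.cong) (simp_all add: sum_root_unity_powers scaleC_of_nat)
  also have "\<dots> = of_nat n" using assms by simp
  finally have "root_average (inverse_one_minus t) n z * ?X = scaleR (1 / real n) (of_nat n)"
    by (simp add: root_average_def mult_scaleR_left)
  also have "\<dots> = of_real (1 / real n * real n)"
    by (simp only: scaleR_conv_of_real of_real_mult of_real_of_nat_eq)
  finally show left: "root_average (inverse_one_minus t) n z * ?X = 1"
    using assms by simp
  have "root_average (inverse_one_minus t) n z * t = t * root_average (inverse_one_minus t) n z"
    by (rule root_average_inverse_one_minus_commute)
  then have "root_average (inverse_one_minus t) n z * ?X = ?X * root_average (inverse_one_minus t) n z"
    by (simp add: algebra_simps mult_scaleC_left mult_scaleC_right power_commuting_commutes)
  then show "?X * root_average (inverse_one_minus t) n z = 1" using left by simp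
qed

lemma norm_root_average_inverse_one_minus_le:
  assumes "n > 0" "t * \<xi> = 1" "R > 0" "3 * norm \<xi> \<le> R"
  shows "norm (root_average (inverse_one_minus t) n (of_real R)) \<le> 1/2"
proof (rule norm_inverse_one_minus_le[OF root_average_inverse_one_minus(1)[OF assms(1)]])
  let ?v = "scaleC (1 / of_real R ^ n) (\<xi> ^ n)"
  show "scaleC (of_real R ^ n) (t ^ n) * ?v = 1"
    using assms(3) left_right_inverse_power[OF assms(2), of n]
    by (simp add: mult_scaleC_left mult_scaleC_right scaleC_scaleC scaleC_one)
  have "norm ?v \<le> (norm \<xi> / R) ^ n"
    using assms(3) by (simp add: norm_scaleC norm_divide norm_power power_divide divide_right_mono norm_power_ineq)
  also have "\<dots> \<le> (norm \<xi> / R) ^ 1" using assms by (intro power_decreasing) auto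
  also have "\<dots> \<le> 1/3" using assms(3,4) by (simp add: field_simps)
  finally show "norm ?v \<le> 1/3" .
qed

lemma root_average_inverse_one_minus_double_far:
  assumes "n > 0" "norm (root_average (inverse_one_minus t) n z - 1) = 1/2"
  shows "1/8 \<le> norm (root_average (inverse_one_minus t) n z - root_average (inverse_one_minus t) (2 * n) z)"
proof -
  let ?A = "root_average (inverse_one_minus t)" and ?u = "scaleC (z ^ n) (t ^ n)"
  have "?u * ?u = scaleC (z ^ (2 * n)) (t ^ (2 * n))"
    by (simp add: mult_scaleC_left mult_scaleC_right scaleC_scaleC mult_2 power_add)
  then have "?A (2 * n) z * (1 - ?u * ?u) = 1"
    using root_average_inverse_one_minus(1)[of "2 * n"] assms(1) by simp
  moreover have "?u * ?A (2 * n) z = ?A (2 * n) z * ?u"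
    using root_average_inverse_one_minus_commute
    by (simp add: mult_scaleC_left mult_scaleC_right power_commuting_commutes)
  ultimately show ?thesis
    using assms(2) by (rule norm_diff_inverse_one_minus_square_ge[OF root_average_inverse_one_minus[OF assms(1)]])
qed

end

lemma not_all_invertible_one_minus:
  fixes t :: "'a::complex_banach_algebra_1"
  assumes "invertible_el t"
  shows "\<exists>w. \<not> invertible_el (1 - scaleC w t)"
proof (rule ccontr)
  assume "\<not> ?thesis"
  then have invertible: "\<And>w. invertible_el (1 - scaleC w t)" by blast
  let ?A = "root_average (inverse_one_minus t)"
  obtain \<xi> where \<xi>: "t * \<xi> = 1" using assms unfolding invertible_el_def by blast
  define R where "R = 3 * norm \<xi> + 3"
  have R: "R > 0" "3 * norm \<xi> \<le> R" unfolding R_def using norm_ge_zero[of \<xi>] by linarith+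
  obtain N where N: "N > 0"
    and close: "\<And>z. cmod z \<le> R \<Longrightarrow> norm (?A (2 * N) z - ?A N z) < 1/8"
    using root_average_double_close[OF continuous_on_inverse_one_minus[OF invertible],
        where e = "1/8" and R = R] by auto
  define \<phi> where "\<phi> r = norm (?A N (of_real r) - 1)" for r
  have "continuous_on UNIV (?A N)"
    by (intro continuous_on_root_average continuous_on_inverse_one_minus invertible)
  then have "continuous_on {0..R} (\<lambda>r. ?A N (of_real r))"
    by (rule continuous_on_compose2) (auto intro: continuous_intros)
  then have "continuous_on {0..R} \<phi>"
    unfolding \<phi>_def by (intro continuous_intros)
  moreover have "\<phi> 0 = 0"
    using root_average_inverse_one_minus(1)[OF invertible N, of 0] N by (simp add: \<phi>_def zero_power)
  moreover have "1/2 \<le> \<phi> R"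
    using norm_root_average_inverse_one_minus_le[OF invertible N \<xi> R] norm_triangle_sub[of 1 "?A N (of_real R)"]
    by (simp add: \<phi>_def norm_minus_commute)
  ultimately obtain r where r: "0 \<le> r" "r \<le> R" "\<phi> r = 1/2"
    using IVT'[of \<phi> 0 "1/2" R] R(1) by auto
  then have "1/8 \<le> norm (?A N (of_real r) - ?A (2 * N) (of_real r))"
    unfolding \<phi>_def by (intro root_average_inverse_one_minus_double_far invertible N)
  moreover have "norm (?A N (of_real r) - ?A (2 * N) (of_real r)) < 1/8"
    using close[of "of_real r"] r by (simp add: norm_minus_commute)
  ultimately show False by simp
qed

theorem spectrum_nonempty: "spectrum (a::'a::complex_banach_algebra_1) \<noteq> {}"
proof
  assume "spectrum a = {}"
  then have invertible: "invertible_el (a - scaleC z 1)" for z unfolding spectrum_def by blast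
  obtain t where t: "a * t = 1" "t * a = 1" using invertible[of 0] unfolding invertible_el_def by auto
  then have "invertible_el t" unfolding invertible_el_def by blast
  moreover have "invertible_el (1 - scaleC w t)" for w
  proof -
    have "t * (a - scaleC w 1) = 1 - scaleC w t"
      using t by (simp add: right_diff_distrib mult_scaleC_right)
    then show ?thesis using invertible_el_mult[OF \<open>invertible_el t\<close> invertible[of w]] by simp
  qed
  ultimately show False using not_all_invertible_one_minus by blast
qed

section \<open>Products in both orders\<close>

lemma spectrum_mult_commute_nonzero:
  fixes a c :: "'a::complex_banach_algebra_1"
  assumes "z \<noteq> 0" "z \<notin> spectrum (a * c)"
  shows "z \<notin> spectrum (c * a)"
proof -
  have "invertible_el (scaleC z (1::'a))"
    using assms(1) by (intro invertible_elI[of _ "scaleC (1 / z) 1" "scaleC (1 / z) 1"])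
      (simp_all add: mult_scaleC_left mult_scaleC_right scaleC_scaleC scaleC_one)
  then show ?thesis
    using assms(2) jacobson_lemma[OF scaleC_one_commute] unfolding spectrum_def by blast
qed

lemma quasinilpotent_mult_commute:
  fixes a c :: "'a::complex_banach_algebra_1"
  assumes "quasinilpotent (a * c)"
  shows "quasinilpotent (c * a)"
proof -
  have "spectrum (c * a) \<subseteq> {0}"
    using assms spectrum_mult_commute_nonzero[of _ a c] unfolding quasinilpotent_def by blast
  then show ?thesis using spectrum_nonempty[of "c * a"] unfolding quasinilpotent_def by blast
qed

lemma power_mult_commute_shift: "((b::'a::ring_1) * a) ^ k * b = b * (a * b) ^ k"
  by (induction k) (auto simp: mult.assoc power_Suc2)

lemma cline_inverse:
  fixes a b x :: "'a::ring_1"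
  assumes x: "x * (a * b) * x = x" "(a * b) * x = x * (a * b)"
  shows "(b * x * x * a) * (b * a) * (b * x * x * a) = b * x * x * a"
    and "(b * a) * (b * x * x * a) = (b * x * x * a) * (b * a)"
proof -
  let ?p = "a * b"
  have "x * x * ?p * ?p * x * x = x * (?p * x) * (?p * x) * x" using x(2) by (simp add: mult.assoc)
  also have "\<dots> = x * x" using x by (simp add: mult.assoc)
  finally have "b * (x * x * ?p * ?p * x * x) * a = b * (x * x) * a" by simp
  then show "(b * x * x * a) * (b * a) * (b * x * x * a) = b * x * x * a"
    by (simp add: mult.assoc)
  have "?p * (x * x) = (x * x) * ?p" using x(2) by (metis mult.assoc)
  then show "(b * a) * (b * x * x * a) = (b * x * x * a) * (b * a)"
    by (metis mult.assoc)
qed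

lemma cline_residual:
  fixes a b x :: "'a::ring_1" and n :: nat
  assumes x: "x * (a * b) * x = x" "(a * b) * x = x * (a * b)"
  defines "c \<equiv> b * (1 - (a * b) ^ (n + 1) * x)"
  shows "a * c = a * b - (a * b) ^ (n + 2) * x"
    and "c * a = b * a - (b * a) ^ (n + 2) * (b * x * x * a)"
proof -
  let ?p = "a * b"
  show "a * c = a * b - (a * b) ^ (n + 2) * x"
    by (simp add: c_def right_diff_distrib mult.assoc)
  have "?p ^ (n + 2) = ?p ^ (n + 1) * ?p" by (subst power_Suc2[symmetric]) simp
  then have "?p ^ (n + 2) * (x * x) = ?p ^ (n + 1) * (?p * x * x)" by (simp add: mult.assoc)
  also have "?p * x * x = x" using x by (metis mult.assoc)
  finally have p_xx: "?p ^ (n + 2) * (x * x) = ?p ^ (n + 1) * x" .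
  have "(b * a) ^ (n + 2) * (b * x * x * a) = ((b * a) ^ (n + 2) * b) * (x * x) * a"
    by (simp only: mult.assoc)
  also have "\<dots> = b * (?p ^ (n + 2) * (x * x)) * a"
    by (simp only: power_mult_commute_shift mult.assoc)
  also have "\<dots> = b * (?p ^ (n + 1) * x) * a" by (simp only: p_xx)
  finally show "c * a = b * a - (b * a) ^ (n + 2) * (b * x * x * a)"
    by (simp add: c_def left_diff_distrib right_diff_distrib mult.assoc)
qed

lemma gpi_Hirano_invertible_mult_commute:
  fixes a b :: "'a::complex_banach_algebra_1"
  assumes "gpi_Hirano_invertible (a * b)"
  shows "gpi_Hirano_invertible (b * a)"
proof -
  obtain x n where x: "x * (a * b) * x = x" "(a * b) * x = x * (a * b)" and "n > 0"
    and "quasinilpotent (a * b - (a * b) ^ (n + 2) * x)"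
    using assms unfolding gpi_Hirano_invertible_def by blast
  then have "quasinilpotent (b * a - (b * a) ^ (n + 2) * (b * x * x * a))"
    using quasinilpotent_mult_commute cline_residual[OF x] by metis
  then show ?thesis
    using cline_inverse[OF x] \<open>n > 0\<close> unfolding gpi_Hirano_invertible_def by blast
qed

theorem lemma4p4:
  fixes a b :: "'a::complex_banach_algebra_1"
  shows "gpi_Hirano_invertible (a * b) \<longleftrightarrow> gpi_Hirano_invertible (b * a)"
  using gpi_Hirano_invertible_mult_commute by blast

end
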